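(* Let $u\in C^1(\mathbb R)$ with $u'$ compactly supported, let $1\le p<\infty$ and $\gamma<-1$. Then $$\limsup_{\lambda\to0^+}\lambda^p\nu_\gamma(E_{\lambda,\gamma/p}[u])\le\frac{\kappa(p,1)}{|\gamma|}\|u'\|_{L^p(\mathbb R)}^p.$$
   Context: Here $N=1$: $\nu_\gamma(E)=\iint_{(x,y)\in E,\,x\ne y}|x-y|^{\gamma-1}\,dx\,dy$ for measurable $E\subset\mathbb R^2$, and $E_{\lambda,b}[u]=\{(x,y)\in\mathbb R^2:x\ne y,\ \frac{|u(x)-u(y)|}{|x-y|^{1+b}}>\lambda\}$. $\kappa(p,1)=\int_{\mathbb S^0}|e\cdot\omega|^p\,d\omega=2$. *)

theory Defs
  imports "HOL-Analysis.Analysis"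
begin

definition nu :: "real \<Rightarrow> (real \<times> real) set \<Rightarrow> ennreal" where
  "nu \<gamma> E = (\<integral>\<^sup>+ z \<in> {z \<in> E. fst z \<noteq> snd z}.
                 ennreal (\<bar>fst z - snd z\<bar> powr (\<gamma> - 1)) \<partial>(lborel \<Otimes>\<^sub>M lborel))"

definition Elev :: "real \<Rightarrow> real \<Rightarrow> (real \<Rightarrow> real) \<Rightarrow> (real \<times> real) set" where
  "Elev lam b u = {(x, y). x \<noteq> y \<and> \<bar>u x - u y\<bar> / \<bar>x - y\<bar> powr (1 + b) > lam}"

text \<open>kappa(p,1) = integral over S^0 = {-1,1} (counting measure) of |e . omega|^p.\<close>
definition kappa1 :: "real \<Rightarrow> real" where
  "kappa1 p = (\<Sum>\<omega>\<in>{-1, 1::real}. \<bar>1 * \<omega>\<bar> powr p)"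

end

theory Submission
  imports Defs
begin

text \<open>
  By the mean value theorem \<open>|u x - u y| = |u' z| * |y - x|\<close> for some \<open>z\<close> between
  \<open>x\<close> and \<open>y\<close>, and \<open>u' z \<noteq> 0\<close> confines \<open>z\<close> to an interval \<open>[-R, R]\<close>. Fix
  \<open>\<epsilon> > 0\<close> and a modulus \<open>\<delta>\<close> of uniform continuity of \<open>|u'| powr p\<close> there. A pair
  \<open>(x, y)\<close> of the level set is either near, \<open>|y - x| < \<delta>\<close>: then
  \<open>|u' z| powr p \<le> |u' x| powr p + \<epsilon>\<close>, which forces \<open>|y - x| \<ge> \<rho> x\<close> where
  \<open>\<lambda> powr p * \<rho> x powr \<gamma> = |u' x| powr p + \<epsilon>\<close>, and \<open>x\<close> lies in \<open>[-R-1, R+1]\<close>; or it is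
  far, \<open>|y - x| \<ge> max \<delta> (|x| - R)\<close>. Integrating \<open>|y - x| powr (\<gamma> - 1)\<close> over
  \<open>|y - x| \<ge> r\<close> gives \<open>2 * r powr \<gamma> / |\<gamma>|\<close>, so \<open>\<lambda> powr p * \<nu>\<^sub>\<gamma>(E)\<close> is at most
  \<open>2/|\<gamma>|\<close> times the integral of \<open>|u'| powr p + \<epsilon>\<close> over \<open>[-R-1, R+1]\<close>, plus
  \<open>\<lambda> powr p\<close> times a finite constant that disappears as \<open>\<lambda> \<rightarrow> 0\<close>. Let \<open>\<epsilon> \<rightarrow> 0\<close>.
\<close>

lemma nn_integral_powr_atLeast:
  fixes \<gamma> r :: real
  assumes \<gamma>: "\<gamma> < 0" and r: "0 < r"
  shows "(\<integral>\<^sup>+t. ennreal (t powr (\<gamma> - 1)) * indicator {r..} t \<partial>lborel) = ennreal (r powr \<gamma> / - \<gamma>)"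
proof -
  have "(\<integral>\<^sup>+t. ennreal (t powr (\<gamma> - 1)) * indicator {r..} t \<partial>lborel) = ennreal (0 - r powr \<gamma> / \<gamma>)"
  proof (rule nn_integral_FTC_atLeast)
    fix t assume "r \<le> t"
    then have "0 < t" using r by simp
    then show "((\<lambda>t. t powr \<gamma> / \<gamma>) has_real_derivative t powr (\<gamma> - 1)) (at t)"
      using \<gamma> by (auto intro!: derivative_eq_intros)
  next
    show "((\<lambda>t. t powr \<gamma> / \<gamma>) \<longlongrightarrow> 0) at_top"
      using \<gamma> by (auto intro!: tendsto_divide_zero tendsto_neg_powr filterlim_ident)
  qed auto
  then show ?thesis by simp
qed

lemma nn_integral_powr_dist_ge:
  fixes \<gamma> r x :: real
  assumes \<gamma>: "\<gamma> < 0" and r: "0 < r"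
  shows "(\<integral>\<^sup>+y. ennreal (if r \<le> \<bar>y - x\<bar> then \<bar>y - x\<bar> powr (\<gamma> - 1) else 0) \<partial>lborel)
     = ennreal (2 * r powr \<gamma> / - \<gamma>)"
proof -
  define g where "g t = ennreal (t powr (\<gamma> - 1)) * indicator {r..} t" for t :: real
  have g[measurable]: "g \<in> borel_measurable borel" unfolding g_def by measurable
  have nonneg: "0 \<le> r powr \<gamma> / - \<gamma>" using \<gamma> by (simp add: divide_nonneg_neg)
  have "(\<integral>\<^sup>+y. ennreal (if r \<le> \<bar>y - x\<bar> then \<bar>y - x\<bar> powr (\<gamma> - 1) else 0) \<partial>lborel)
     = (\<integral>\<^sup>+t. ennreal (if r \<le> \<bar>t\<bar> then \<bar>t\<bar> powr (\<gamma> - 1) else 0) \<partial>lborel)"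
    using nn_integral_real_affine[of "\<lambda>t. ennreal (if r \<le> \<bar>t\<bar> then \<bar>t\<bar> powr (\<gamma> - 1) else 0)" 1 "-x"]
    by (simp cong: if_cong)
  also have "\<dots> = (\<integral>\<^sup>+t. g t + g (0 + (-1) * t) \<partial>lborel)"
    using r by (intro nn_integral_cong) (auto simp: g_def indicator_def)
  also have "\<dots> = (\<integral>\<^sup>+t. g t \<partial>lborel) + (\<integral>\<^sup>+t. g (0 + (-1) * t) \<partial>lborel)"
    by (rule nn_integral_add) measurable
  also have "(\<integral>\<^sup>+t. g (0 + (-1) * t) \<partial>lborel) = (\<integral>\<^sup>+t. g t \<partial>lborel)"
    using nn_integral_real_affine[OF g, of "-1" 0] by simp
  also have "(\<integral>\<^sup>+t. g t \<partial>lborel) = ennreal (r powr \<gamma> / - \<gamma>)"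
    unfolding g_def by (rule nn_integral_powr_atLeast[OF \<gamma> r])
  finally show ?thesis
    using \<gamma> unfolding ennreal_plus[OF nonneg nonneg, symmetric] by simp
qed

lemma MVT_closer_point:
  fixes u u' :: "real \<Rightarrow> real"
  assumes deriv: "\<And>x. (u has_real_derivative u' x) (at x)" and xy: "x \<noteq> y"
  obtains z where "\<bar>z - x\<bar> \<le> \<bar>y - x\<bar>" and "u y - u x = (y - x) * u' z"
proof (cases "x < y")
  case True
  from MVT2[OF True deriv] obtain z where "x < z" "z < y" "u y - u x = (y - x) * u' z" by blast
  then show ?thesis by (intro that[of z]) auto
next
  case False
  then have "y < x" using xy by simp
  from MVT2[OF this deriv] obtain z where "y < z" "z < x" "u x - u y = (x - y) * u' z" by blast
  then show ?thesis by (intro that[of z]) (auto simp: algebra_simps)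
qed

lemma dist_ge_of_quotient_gt:
  fixes lam h a W p \<gamma> :: real
  assumes lam: "0 < lam" and h: "0 < h" and p: "0 < p" and \<gamma>: "\<gamma> < 0"
    and a: "0 \<le> a" "a powr p \<le> W"
    and gt: "lam * h powr (1 + \<gamma> / p) < a * h"
  shows "(W / lam powr p) powr (1 / \<gamma>) \<le> h"
proof -
  have "lam powr p * h powr (p + \<gamma>) = (lam * h powr (1 + \<gamma> / p)) powr p"
    using lam h p by (simp add: powr_mult powr_powr distrib_right)
  also have "\<dots> < (a * h) powr p"
    using gt lam h p by (intro powr_less_mono2) auto
  also have "\<dots> = a powr p * h powr p"
    using a h by (simp add: powr_mult)
  also have "\<dots> \<le> W * h powr p"
    using a by (simp add: mult_right_mono)
  finally have "lam powr p * h powr \<gamma> * h powr p < W * h powr p"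
    by (simp add: powr_add mult_ac)
  then have "h powr \<gamma> \<le> W / lam powr p"
    using lam h by (simp add: pos_le_divide_eq mult_ac)
  then have "(W / lam powr p) powr (1 / \<gamma>) \<le> (h powr \<gamma>) powr (1 / \<gamma>)"
    using \<gamma> h by (intro powr_mono2') auto
  also have "\<dots> = h"
    using \<gamma> h by (simp add: powr_powr)
  finally show ?thesis .
qed

lemma Elev_near_or_far:
  fixes u u' :: "real \<Rightarrow> real"
  assumes deriv: "\<And>x. (u has_real_derivative u' x) (at x)"
    and R: "\<And>z. u' z \<noteq> 0 \<Longrightarrow> \<bar>z\<bar> \<le> R"
    and p: "0 < p" and \<gamma>: "\<gamma> < 0" and lam: "0 < lam" and \<delta>: "\<delta> \<le> 1"
    and near: "\<And>x z. \<bar>z\<bar> \<le> R \<Longrightarrow> \<bar>x - z\<bar> < \<delta> \<Longrightarrow> \<bar>u' z\<bar> powr p \<le> \<bar>u' x\<bar> powr p + \<epsilon>"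
    and xy: "(x, y) \<in> Elev lam (\<gamma> / p) u"
  shows "(\<bar>x\<bar> \<le> R + 1 \<and> ((\<bar>u' x\<bar> powr p + \<epsilon>) / lam powr p) powr (1 / \<gamma>) \<le> \<bar>y - x\<bar>)
    \<or> max \<delta> (\<bar>x\<bar> - R) \<le> \<bar>y - x\<bar>"
proof -
  from xy have "x \<noteq> y" and quot: "lam < \<bar>u x - u y\<bar> / \<bar>y - x\<bar> powr (1 + \<gamma> / p)"
    by (auto simp: Elev_def abs_minus_commute)
  then obtain z where z: "\<bar>z - x\<bar> \<le> \<bar>y - x\<bar>" and mvt: "u y - u x = (y - x) * u' z"
    using MVT_closer_point[OF deriv] by metis
  have diff: "\<bar>u x - u y\<bar> = \<bar>u' z\<bar> * \<bar>y - x\<bar>"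
    using mvt by (metis abs_minus_commute abs_mult mult.commute)
  have "u' z \<noteq> 0"
    using quot lam diff by auto
  then have zR: "\<bar>z\<bar> \<le> R" by (rule R)
  show ?thesis
  proof (cases "\<delta> \<le> \<bar>y - x\<bar>")
    case True
    then show ?thesis using z zR by linarith
  next
    case False
    then have xz: "\<bar>x - z\<bar> < \<delta>" using z by linarith
    have "lam * \<bar>y - x\<bar> powr (1 + \<gamma> / p) < \<bar>u' z\<bar> * \<bar>y - x\<bar>"
      using quot \<open>x \<noteq> y\<close> by (simp add: diff pos_less_divide_eq)
    then have "((\<bar>u' x\<bar> powr p + \<epsilon>) / lam powr p) powr (1 / \<gamma>) \<le> \<bar>y - x\<bar>"
      using \<open>x \<noteq> y\<close> near[OF zR xz] lam p \<gamma> by (intro dist_ge_of_quotient_gt) auto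
    moreover have "\<bar>x\<bar> \<le> R + 1" using xz zR \<delta> by linarith
    ultimately show ?thesis by blast
  qed
qed

lemma nu_le_of_far:
  fixes E :: "(real \<times> real) set" and K :: "real set" and \<rho> m :: "real \<Rightarrow> real"
  assumes \<gamma>: "\<gamma> < 0" and K[measurable]: "K \<in> sets borel"
    and \<rho>[measurable]: "\<rho> \<in> borel_measurable borel" and m[measurable]: "m \<in> borel_measurable borel"
    and pos: "\<And>x. 0 < \<rho> x" "\<And>x. 0 < m x"
    and far: "\<And>x y. (x, y) \<in> E \<Longrightarrow> (x \<in> K \<and> \<rho> x \<le> \<bar>y - x\<bar>) \<or> m x \<le> \<bar>y - x\<bar>"
  shows "nu \<gamma> E \<le> (\<integral>\<^sup>+x. ennreal (2 * \<rho> x powr \<gamma> / - \<gamma>) * indicator K x \<partial>lborel)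
                 + (\<integral>\<^sup>+x. ennreal (2 * m x powr \<gamma> / - \<gamma>) \<partial>lborel)"
proof -
  define k where "k r x y = ennreal (if r \<le> \<bar>y - x\<bar> then \<bar>y - x\<bar> powr (\<gamma> - 1) else 0)"
    for r x y :: real
  define F where "F = (\<lambda>(x, y). k (\<rho> x) x y * indicator K x + k (m x) x y)"
  have [measurable]: "F \<in> borel_measurable (lborel \<Otimes>\<^sub>M lborel)"
    unfolding F_def k_def by measurable
  have "nu \<gamma> E \<le> integral\<^sup>N (lborel \<Otimes>\<^sub>M lborel) F"
    unfolding nu_def
  proof (intro nn_integral_mono)
    fix z :: "real \<times> real"
    obtain x y where z: "z = (x, y)" by (cases z)
    show "ennreal (\<bar>fst z - snd z\<bar> powr (\<gamma> - 1)) * indicator {z \<in> E. fst z \<noteq> snd z} z \<le> F z"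
    proof (cases "z \<in> E")
      case True
      then show ?thesis
        using far[of x y] unfolding z F_def k_def
        by (auto simp: indicator_def abs_minus_commute add_increasing add_increasing2)
    qed (simp add: indicator_def)
  qed
  also have "\<dots> = (\<integral>\<^sup>+x. \<integral>\<^sup>+y. F (x, y) \<partial>lborel \<partial>lborel)"
    by (rule lborel.nn_integral_fst[symmetric]) measurable
  also have "\<dots> = (\<integral>\<^sup>+x. ennreal (2 * \<rho> x powr \<gamma> / - \<gamma>) * indicator K x
                          + ennreal (2 * m x powr \<gamma> / - \<gamma>) \<partial>lborel)"
  proof (intro nn_integral_cong)
    fix x :: real
    have "(\<integral>\<^sup>+y. F (x, y) \<partial>lborel)
        = (\<integral>\<^sup>+y. k (\<rho> x) x y \<partial>lborel) * indicator K x + (\<integral>\<^sup>+y. k (m x) x y \<partial>lborel)"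
      unfolding F_def k_def by (simp add: nn_integral_add nn_integral_multc)
    then show "(\<integral>\<^sup>+y. F (x, y) \<partial>lborel) = ennreal (2 * \<rho> x powr \<gamma> / - \<gamma>) * indicator K x
                                         + ennreal (2 * m x powr \<gamma> / - \<gamma>)"
      unfolding k_def using nn_integral_powr_dist_ge[OF \<gamma>] pos by simp
  qed
  also have "\<dots> = (\<integral>\<^sup>+x. ennreal (2 * \<rho> x powr \<gamma> / - \<gamma>) * indicator K x \<partial>lborel)
                 + (\<integral>\<^sup>+x. ennreal (2 * m x powr \<gamma> / - \<gamma>) \<partial>lborel)"
    by (rule nn_integral_add) measurable
  finally show ?thesis .
qed

lemma nu_Elev_le:
  fixes u u' :: "real \<Rightarrow> real"
  assumes deriv: "\<And>x. (u has_real_derivative u' x) (at x)"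
    and R: "\<And>z. u' z \<noteq> 0 \<Longrightarrow> \<bar>z\<bar> \<le> R" and u'[measurable]: "u' \<in> borel_measurable borel"
    and p: "0 < p" and \<gamma>: "\<gamma> < 0" and lam: "0 < lam" and \<epsilon>: "0 < \<epsilon>" and \<delta>: "0 < \<delta>" "\<delta> \<le> 1"
    and near: "\<And>x z. \<bar>z\<bar> \<le> R \<Longrightarrow> \<bar>x - z\<bar> < \<delta> \<Longrightarrow> \<bar>u' z\<bar> powr p \<le> \<bar>u' x\<bar> powr p + \<epsilon>"
  shows "ennreal (lam powr p) * nu \<gamma> (Elev lam (\<gamma> / p) u)
    \<le> (\<integral>\<^sup>+x. ennreal (2 * (\<bar>u' x\<bar> powr p + \<epsilon>) / - \<gamma>) * indicator {-(R+1)..R+1} x \<partial>lborel)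
      + ennreal (lam powr p) * (\<integral>\<^sup>+x. ennreal (2 * max \<delta> (\<bar>x\<bar> - R) powr \<gamma> / - \<gamma>) \<partial>lborel)"
proof -
  define \<rho> where "\<rho> x = ((\<bar>u' x\<bar> powr p + \<epsilon>) / lam powr p) powr (1 / \<gamma>)" for x
  have [measurable]: "\<rho> \<in> borel_measurable borel" unfolding \<rho>_def by measurable
  have W_pos: "0 < \<bar>u' x\<bar> powr p + \<epsilon>" for x
    using \<epsilon> by (intro add_nonneg_pos) auto
  have \<rho>_pos: "0 < \<rho> x" for x
    unfolding \<rho>_def using W_pos[of x] lam by simp
  have \<rho>_scale: "lam powr p * \<rho> x powr \<gamma> = \<bar>u' x\<bar> powr p + \<epsilon>" for x
    unfolding \<rho>_def using W_pos[of x] lam \<gamma> by (simp add: powr_powr)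
  have far: "(x \<in> {-(R+1)..R+1} \<and> \<rho> x \<le> \<bar>y - x\<bar>) \<or> max \<delta> (\<bar>x\<bar> - R) \<le> \<bar>y - x\<bar>"
    if "(x, y) \<in> Elev lam (\<gamma> / p) u" for x y
    using Elev_near_or_far[OF deriv R p \<gamma> lam \<delta>(2) near that] unfolding \<rho>_def by auto
  have "nu \<gamma> (Elev lam (\<gamma> / p) u)
     \<le> (\<integral>\<^sup>+x. ennreal (2 * \<rho> x powr \<gamma> / - \<gamma>) * indicator {-(R+1)..R+1} x \<partial>lborel)
       + (\<integral>\<^sup>+x. ennreal (2 * max \<delta> (\<bar>x\<bar> - R) powr \<gamma> / - \<gamma>) \<partial>lborel)"
    using \<gamma> \<rho>_pos \<delta> far by (intro nu_le_of_far) auto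
  then have "ennreal (lam powr p) * nu \<gamma> (Elev lam (\<gamma> / p) u)
     \<le> ennreal (lam powr p) * (\<integral>\<^sup>+x. ennreal (2 * \<rho> x powr \<gamma> / - \<gamma>) * indicator {-(R+1)..R+1} x \<partial>lborel)
       + ennreal (lam powr p) * (\<integral>\<^sup>+x. ennreal (2 * max \<delta> (\<bar>x\<bar> - R) powr \<gamma> / - \<gamma>) \<partial>lborel)"
    by (simp add: distrib_left[symmetric] mult_left_mono)
  also have "ennreal (lam powr p) * (\<integral>\<^sup>+x. ennreal (2 * \<rho> x powr \<gamma> / - \<gamma>) * indicator {-(R+1)..R+1} x \<partial>lborel)
      = (\<integral>\<^sup>+x. ennreal (2 * (\<bar>u' x\<bar> powr p + \<epsilon>) / - \<gamma>) * indicator {-(R+1)..R+1} x \<partial>lborel)"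
  proof -
    have "ennreal (lam powr p) * ennreal (2 * \<rho> x powr \<gamma> / - \<gamma>) = ennreal (2 * (\<bar>u' x\<bar> powr p + \<epsilon>) / - \<gamma>)"
      for x
    proof -
      have "0 \<le> 2 * \<rho> x powr \<gamma> / - \<gamma>" using \<gamma> by (simp add: divide_nonneg_neg)
      then show ?thesis
        by (simp add: ennreal_mult[symmetric] \<rho>_scale[of x, symmetric] mult_ac)
    qed
    then show ?thesis
      by (subst nn_integral_cmult[symmetric]) (auto simp: mult.assoc[symmetric])
  qed
  finally show ?thesis .
qed

lemma nn_integral_max_powr_finite:
  fixes \<delta> R \<gamma> :: real
  assumes \<delta>: "0 < \<delta>" and R: "0 \<le> R" and \<gamma>: "\<gamma> < -1"
  shows "(\<integral>\<^sup>+x. ennreal (max \<delta> (\<bar>x\<bar> - R) powr \<gamma>) \<partial>lborel) < \<infinity>"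
proof -
  define K where "K = {-(R+1)..R+1}"
  define tail where "tail x = (if R + 1 \<le> \<bar>x\<bar> then \<bar>x\<bar> powr \<gamma> else 0)" for x :: real
  have bound: "max \<delta> (\<bar>x\<bar> - R) powr \<gamma> \<le> \<delta> powr \<gamma> * indicator K x + (R+1) powr (-\<gamma>) * tail x" for x
  proof (cases "\<bar>x\<bar> \<le> R + 1")
    case True
    have "max \<delta> (\<bar>x\<bar> - R) powr \<gamma> \<le> \<delta> powr \<gamma>" using \<delta> \<gamma> by (intro powr_mono2') auto
    moreover have "0 \<le> (R+1) powr (-\<gamma>) * tail x" by (simp add: tail_def)
    moreover have "x \<in> K" using True by (auto simp: K_def)
    ultimately show ?thesis by simp
  next
    case False
    have "\<bar>x\<bar> \<le> (\<bar>x\<bar> - R) * (R + 1)"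
      using mult_nonneg_nonneg[of R "\<bar>x\<bar> - R - 1"] False R by (simp add: algebra_simps)
    then have "\<bar>x\<bar> / (R + 1) \<le> \<bar>x\<bar> - R" using R by (simp add: divide_le_eq)
    then have "\<bar>x\<bar> / (R + 1) \<le> max \<delta> (\<bar>x\<bar> - R)" by linarith
    then have "max \<delta> (\<bar>x\<bar> - R) powr \<gamma> \<le> (\<bar>x\<bar> / (R + 1)) powr \<gamma>"
      using \<gamma> False R by (intro powr_mono2') auto
    also have "\<dots> = (R + 1) powr (-\<gamma>) * \<bar>x\<bar> powr \<gamma>"
      using False R by (simp add: powr_divide powr_minus_divide)
    finally have "max \<delta> (\<bar>x\<bar> - R) powr \<gamma> \<le> (R + 1) powr (-\<gamma>) * \<bar>x\<bar> powr \<gamma>" .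
    moreover have "x \<notin> K" using False by (auto simp: K_def)
    ultimately show ?thesis using False by (simp add: tail_def)
  qed
  have "(\<integral>\<^sup>+x. ennreal (max \<delta> (\<bar>x\<bar> - R) powr \<gamma>) \<partial>lborel)
      \<le> (\<integral>\<^sup>+x. ennreal (\<delta> powr \<gamma>) * indicator K x + ennreal ((R+1) powr (-\<gamma>)) * ennreal (tail x) \<partial>lborel)"
  proof (intro nn_integral_mono)
    fix x
    have "0 \<le> tail x" by (simp add: tail_def)
    then show "ennreal (max \<delta> (\<bar>x\<bar> - R) powr \<gamma>)
        \<le> ennreal (\<delta> powr \<gamma>) * indicator K x + ennreal ((R+1) powr (-\<gamma>)) * ennreal (tail x)"
      using bound[of x] by (cases "x \<in> K") (auto simp flip: ennreal_plus ennreal_mult intro: ennreal_leI)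
  qed
  also have "\<dots> = ennreal (\<delta> powr \<gamma>) * emeasure lborel K
      + ennreal ((R+1) powr (-\<gamma>)) * (\<integral>\<^sup>+x. ennreal (tail x) \<partial>lborel)"
    unfolding K_def tail_def by (simp add: nn_integral_add nn_integral_cmult nn_integral_cmult_indicator)
  also have "\<dots> < \<infinity>"
  proof -
    have "(\<integral>\<^sup>+x. ennreal (tail x) \<partial>lborel) = ennreal (2 * (R + 1) powr (\<gamma> + 1) / - (\<gamma> + 1))"
      using R \<gamma> nn_integral_powr_dist_ge[of "\<gamma> + 1" "R + 1" 0] by (simp add: tail_def cong: if_cong)
    then show ?thesis using R by (simp add: K_def ennreal_mult_less_top)
  qed
  finally show ?thesis .
qed

lemma Limsup_at_right_0_le_of_powr_bound:
  fixes f :: "real \<Rightarrow> ennreal"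
  assumes p: "0 < p" and B: "B < \<infinity>"
    and bound: "\<And>lam. 0 < lam \<Longrightarrow> f lam \<le> N + ennreal (lam powr p) * B"
  shows "Limsup (at_right 0) f \<le> N"
proof -
  have "((\<lambda>lam::real. lam powr p) \<longlongrightarrow> 0) (at_right 0)"
    using p by (intro tendsto_zero_powrI)
      (auto intro: tendsto_ident_at eventually_at_right_less[THEN eventually_mono])
  then have "((\<lambda>lam::real. B * ennreal (lam powr p)) \<longlongrightarrow> B * 0) (at_right 0)"
    using B by (intro ennreal_tendsto_cmult tendsto_ennrealI[where x = 0, simplified]) auto
  then have lim: "((\<lambda>lam. N + ennreal (lam powr p) * B) \<longlongrightarrow> N) (at_right 0)"
    using tendsto_add[OF tendsto_const] by (fastforce simp: mult.commute)
  have "Limsup (at_right 0) f \<le> Limsup (at_right 0) (\<lambda>lam. N + ennreal (lam powr p) * B)"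
    by (intro Limsup_mono eventually_mono[OF eventually_at_right_less] bound) simp
  also have "\<dots> = N" by (rule lim_imp_Limsup[OF _ lim]) simp
  finally show ?thesis .
qed

lemma ennreal_le_of_le_add_epsilon_mult:
  fixes C :: real
  assumes C: "0 \<le> C" and le: "\<And>\<epsilon>. 0 < \<epsilon> \<Longrightarrow> x \<le> y + ennreal (C * \<epsilon>)"
  shows "x \<le> y"
proof (rule ennreal_le_epsilon)
  fix e :: real assume e: "0 < e"
  then have "x \<le> y + ennreal (C * (e / (C + 1)))" using C by (intro le) simp
  also have "\<dots> \<le> y + ennreal e"
    using C e by (intro add_left_mono ennreal_leI) (simp add: field_simps)
  finally show "x \<le> y + ennreal e" .
qed

lemma continuous_on_UNIV_near_bounded:
  fixes w :: "real \<Rightarrow> real"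
  assumes w: "continuous_on UNIV w" and \<epsilon>: "0 < \<epsilon>"
  obtains \<delta> where "0 < \<delta>" "\<delta> \<le> 1" "\<And>x z. \<bar>z\<bar> \<le> R \<Longrightarrow> \<bar>x - z\<bar> < \<delta> \<Longrightarrow> \<bar>w z - w x\<bar> < \<epsilon>"
proof -
  have "uniformly_continuous_on (cball 0 (R + 1)) w"
    by (rule compact_uniformly_continuous) (auto intro: continuous_on_subset[OF w])
  then obtain d where d: "0 < d"
    and uc: "\<And>x z. x \<in> cball 0 (R + 1) \<Longrightarrow> z \<in> cball 0 (R + 1) \<Longrightarrow> dist z x < d \<Longrightarrow> dist (w z) (w x) < \<epsilon>"
    using \<epsilon> unfolding uniformly_continuous_on_def by metis
  show ?thesis
  proof (rule that[of "min d 1"])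
    fix x z assume "\<bar>z\<bar> \<le> R" "\<bar>x - z\<bar> < min d 1"
    then show "\<bar>w z - w x\<bar> < \<epsilon>"
      using uc[of x z] by (auto simp: dist_real_def)
  qed (use d in auto)
qed

lemma compact_support_bound:
  fixes f :: "real \<Rightarrow> real"
  assumes "compact (closure {x. f x \<noteq> 0})"
  obtains R where "0 \<le> R" and "\<And>z. f z \<noteq> 0 \<Longrightarrow> \<bar>z\<bar> \<le> R"
proof -
  obtain R0 where R0: "\<forall>x \<in> closure {x. f x \<noteq> 0}. norm x \<le> R0"
    using compact_imp_bounded[OF assms] unfolding bounded_iff by (elim exE)
  show thesis
  proof (rule that[of "max R0 0"])
    fix z assume "f z \<noteq> 0"
    then have "z \<in> closure {x. f x \<noteq> 0}" by (intro closure_subset[THEN subsetD]) simp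
    with R0 have "norm z \<le> R0" by (rule bspec)
    then show "\<bar>z\<bar> \<le> max R0 0" by simp
  qed simp
qed

lemma Limsup_nu_Elev_le:
  fixes u u' :: "real \<Rightarrow> real"
  assumes deriv: "\<And>x. (u has_real_derivative u' x) (at x)" and cont: "continuous_on UNIV u'"
    and R: "\<And>z. u' z \<noteq> 0 \<Longrightarrow> \<bar>z\<bar> \<le> R" and R_nonneg: "0 \<le> R"
    and p: "0 < p" and \<gamma>: "\<gamma> < -1" and \<epsilon>: "0 < \<epsilon>"
  shows "Limsup (at_right 0) (\<lambda>lam. ennreal (lam powr p) * nu \<gamma> (Elev lam (\<gamma> / p) u))
    \<le> ennreal (2 / - \<gamma>) * (\<integral>\<^sup>+x. ennreal (\<bar>u' x\<bar> powr p) \<partial>lborel) + ennreal (2 / - \<gamma> * (2 * R + 2) * \<epsilon>)"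
proof -
  have [measurable]: "u' \<in> borel_measurable borel"
    using cont by (rule borel_measurable_continuous_onI)
  have "continuous_on UNIV (\<lambda>x. \<bar>u' x\<bar> powr p)"
    using cont p by (intro continuous_on_powr' continuous_on_rabs continuous_on_const) auto
  then obtain \<delta> where \<delta>: "0 < \<delta>" "\<delta> \<le> 1"
    and near: "\<And>x z. \<bar>z\<bar> \<le> R \<Longrightarrow> \<bar>x - z\<bar> < \<delta> \<Longrightarrow> \<bar>\<bar>u' z\<bar> powr p - \<bar>u' x\<bar> powr p\<bar> < \<epsilon>"
    using continuous_on_UNIV_near_bounded[OF _ \<epsilon>] by metis
  have near_le: "\<bar>u' z\<bar> powr p \<le> \<bar>u' x\<bar> powr p + \<epsilon>" if "\<bar>z\<bar> \<le> R" "\<bar>x - z\<bar> < \<delta>" for x z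
    using near[OF that] by linarith
  define K where "K = {-(R+1)..R+1::real}"
  define c where "c = 2 / - \<gamma>"
  have c: "0 \<le> c" using \<gamma> by (simp add: c_def)
  define N where "N = (\<integral>\<^sup>+x. ennreal (2 * (\<bar>u' x\<bar> powr p + \<epsilon>) / - \<gamma>) * indicator K x \<partial>lborel)"
  have "Limsup (at_right 0) (\<lambda>lam. ennreal (lam powr p) * nu \<gamma> (Elev lam (\<gamma> / p) u)) \<le> N"
  proof (rule Limsup_at_right_0_le_of_powr_bound[OF p])
    have "(\<integral>\<^sup>+x. ennreal (max \<delta> (\<bar>x\<bar> - R) powr \<gamma>) \<partial>lborel) < \<infinity>"
      using \<delta>(1) R_nonneg \<gamma> by (rule nn_integral_max_powr_finite)
    moreover have "(\<integral>\<^sup>+x. ennreal (2 * max \<delta> (\<bar>x\<bar> - R) powr \<gamma> / - \<gamma>) \<partial>lborel)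
        = ennreal (2 / - \<gamma>) * (\<integral>\<^sup>+x. ennreal (max \<delta> (\<bar>x\<bar> - R) powr \<gamma>) \<partial>lborel)"
      using \<gamma> by (subst nn_integral_cmult[symmetric]) (auto simp: ennreal_mult[symmetric])
    ultimately show "(\<integral>\<^sup>+x. ennreal (2 * max \<delta> (\<bar>x\<bar> - R) powr \<gamma> / - \<gamma>) \<partial>lborel) < \<infinity>"
      by (simp add: ennreal_mult_less_top)
  next
    fix lam :: real assume "0 < lam"
    then show "ennreal (lam powr p) * nu \<gamma> (Elev lam (\<gamma> / p) u)
        \<le> N + ennreal (lam powr p) * (\<integral>\<^sup>+x. ennreal (2 * max \<delta> (\<bar>x\<bar> - R) powr \<gamma> / - \<gamma>) \<partial>lborel)"
      unfolding N_def K_def using \<gamma> by (intro nu_Elev_le[OF deriv R _ p _ _ \<epsilon> \<delta> near_le]) auto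
  qed
  also have "N \<le> ennreal c * (\<integral>\<^sup>+x. ennreal (\<bar>u' x\<bar> powr p) \<partial>lborel) + ennreal (c * (2 * R + 2) * \<epsilon>)"
  proof -
    have "ennreal (2 * (\<bar>u' x\<bar> powr p + \<epsilon>) / - \<gamma>) * indicator K x
        \<le> ennreal c * ennreal (\<bar>u' x\<bar> powr p) + ennreal (c * \<epsilon>) * indicator K x" for x
    proof -
      have "2 * (\<bar>u' x\<bar> powr p + \<epsilon>) / - \<gamma> = c * \<bar>u' x\<bar> powr p + c * \<epsilon>"
        using \<gamma> by (simp add: c_def field_simps)
      then have "ennreal (2 * (\<bar>u' x\<bar> powr p + \<epsilon>) / - \<gamma>) = ennreal c * ennreal (\<bar>u' x\<bar> powr p) + ennreal (c * \<epsilon>)"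
        using c \<epsilon> by (simp add: ennreal_plus ennreal_mult)
      then show ?thesis by (simp add: indicator_def)
    qed
    then have "N \<le> (\<integral>\<^sup>+x. ennreal c * ennreal (\<bar>u' x\<bar> powr p) + ennreal (c * \<epsilon>) * indicator K x \<partial>lborel)"
      unfolding N_def by (rule nn_integral_mono)
    also have "\<dots> = ennreal c * (\<integral>\<^sup>+x. ennreal (\<bar>u' x\<bar> powr p) \<partial>lborel) + ennreal (c * \<epsilon>) * emeasure lborel K"
      by (simp add: K_def nn_integral_add nn_integral_cmult nn_integral_cmult_indicator)
    also have "emeasure lborel K = ennreal (2 * R + 2)"
      using R_nonneg by (simp add: K_def)
    also have "ennreal (c * \<epsilon>) * ennreal (2 * R + 2) = ennreal (c * (2 * R + 2) * \<epsilon>)"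
      using c \<epsilon> R_nonneg by (subst ennreal_mult[symmetric]) (auto simp: mult_ac)
    finally show ?thesis .
  qed
  finally show ?thesis unfolding c_def .
qed

theorem lemma3p5:
  fixes u u' :: "real \<Rightarrow> real" and p \<gamma> :: real
  assumes deriv: "\<And>x. (u has_real_derivative u' x) (at x)"
    and cont: "continuous_on UNIV u'"
    and supp: "compact (closure {x. u' x \<noteq> 0})"
    and p: "1 \<le> p"
    and \<gamma>: "\<gamma> < -1"
  shows "Limsup (at_right 0) (\<lambda>lam. ennreal (lam powr p) * nu \<gamma> (Elev lam (\<gamma> / p) u))
           \<le> ennreal (kappa1 p / \<bar>\<gamma>\<bar>) * (\<integral>\<^sup>+ x. ennreal (\<bar>u' x\<bar> powr p) \<partial>lborel)"
proof -
  obtain R where R_nonneg: "0 \<le> R" and R: "\<And>z. u' z \<noteq> 0 \<Longrightarrow> \<bar>z\<bar> \<le> R"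
    using compact_support_bound[OF supp] by metis
  have "Limsup (at_right 0) (\<lambda>lam. ennreal (lam powr p) * nu \<gamma> (Elev lam (\<gamma> / p) u))
      \<le> ennreal (2 / - \<gamma>) * (\<integral>\<^sup>+ x. ennreal (\<bar>u' x\<bar> powr p) \<partial>lborel)"
  proof (rule ennreal_le_of_le_add_epsilon_mult)
    show "0 \<le> 2 / - \<gamma> * (2 * R + 2)" using \<gamma> R_nonneg by (intro mult_nonneg_nonneg) auto
    fix \<epsilon> :: real assume "0 < \<epsilon>"
    with p \<gamma> show "Limsup (at_right 0) (\<lambda>lam. ennreal (lam powr p) * nu \<gamma> (Elev lam (\<gamma> / p) u))
        \<le> ennreal (2 / - \<gamma>) * (\<integral>\<^sup>+ x. ennreal (\<bar>u' x\<bar> powr p) \<partial>lborel)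
          + ennreal (2 / - \<gamma> * (2 * R + 2) * \<epsilon>)"
      by (intro Limsup_nu_Elev_le[OF deriv cont R R_nonneg]) simp_all
  qed
  moreover have "kappa1 p / \<bar>\<gamma>\<bar> = 2 / - \<gamma>"
    using \<gamma> by (simp add: kappa1_def)
  ultimately show ?thesis by (simp only:)
qed

end
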